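(* Let $G$ be a connected bipartite graph with color classes $E$ (emerald) and $V$ (violet), and fix a triangulation $\mathscr T$ of the root polytope $Q_G$. Let $\Sigma$ be a cycle-free subgraph of $G$ (with vertex set $E\cup V$) such that the corresponding simplex $\sigma\subset Q_G$ is an interior face of $\mathscr T$, and let $C$ be a connected component of $\Sigma$. Then there is a unique maximal simplex of $\mathscr T$ containing $\sigma$ such that in the corresponding spanning tree $\Gamma_C\supset\Sigma$, every edge of $\Gamma_C\setminus\Sigma$ has its violet endpoint facing $C$.
   Context: $Q_G\subset\mathbf R^E\oplus\mathbf R^V$ is the convex hull of $\mathbf i_{\{e\}}+\mathbf i_{\{v\}}$ over edges $ev$ of $G$. The simplex corresponding to a cycle-free set of edges is the convex hull of the corresponding vertices of $Q_G$ (these are affinely independent exactly when the edge set is cycle-free); maximal simplices correspond to spanning trees. A triangulation is a collection of full-dimensional such simplices pairwise meeting in common faces with union $Q_G$; its faces are the faces of these simplices, and a face is interior if it is not contained in the boundary of $Q_G$. For a tree $\Gamma$ containing a connected subgraph $C$ and an edge $\varepsilon\in\Gamma\setminus C$, the endpoint of $\varepsilon$ closer to $C$ in $\Gamma$ is said to face $C$. *)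

theory Defs
  imports "HOL-Analysis.Analysis"
begin

text \<open>Bipartite graphs with colour classes E = UNIV :: 'e set (emerald) and
 V = UNIV :: 'v set (violet); an edge set is a set of pairs (e,v).
 Vertices of the graph are of type 'e + 'v (Inl e emerald, Inr v violet).\<close>

definition badj :: "('e \<times> 'v) set \<Rightarrow> ('e + 'v) \<Rightarrow> ('e + 'v) \<Rightarrow> bool" where
  "badj F x y \<longleftrightarrow> (\<exists>e v. (e, v) \<in> F \<and>
      ((x = Inl e \<and> y = Inr v) \<or> (x = Inr v \<and> y = Inl e)))"

definition breach :: "('e \<times> 'v) set \<Rightarrow> ('e + 'v) \<Rightarrow> ('e + 'v) \<Rightarrow> bool" where
  "breach F = (badj F)\<^sup>*\<^sup>*"

definition bconnected :: "('e \<times> 'v) set \<Rightarrow> bool" where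
  "bconnected F \<longleftrightarrow> (\<forall>x y. breach F x y)"

text \<open>Cycle-free: no edge lies on a cycle, i.e. removing any edge disconnects its endpoints.\<close>
definition cycle_free :: "('e \<times> 'v) set \<Rightarrow> bool" where
  "cycle_free F \<longleftrightarrow> (\<forall>e v. (e, v) \<in> F \<longrightarrow> \<not> breach (F - {(e, v)}) (Inl e) (Inr v))"

definition spanning_tree :: "('e \<times> 'v) set \<Rightarrow> ('e \<times> 'v) set \<Rightarrow> bool" where
  "spanning_tree G T \<longleftrightarrow> T \<subseteq> G \<and> cycle_free T \<and> bconnected T"

definition components :: "('e \<times> 'v) set \<Rightarrow> ('e + 'v) set set" where
  "components F = {{y. breach F x y} | x. True}"

definition walk :: "('e \<times> 'v) set \<Rightarrow> ('e + 'v) list \<Rightarrow> bool" where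
  "walk F xs \<longleftrightarrow> xs \<noteq> [] \<and> (\<forall>i. Suc i < length xs \<longrightarrow> badj F (xs ! i) (xs ! Suc i))"

definition gdist :: "('e \<times> 'v) set \<Rightarrow> ('e + 'v) \<Rightarrow> ('e + 'v) set \<Rightarrow> nat" where
  "gdist F x W = (LEAST n. \<exists>xs. walk F xs \<and> hd xs = x \<and> last xs \<in> W \<and> length xs = Suc n)"

text \<open>In the tree Gamma, the violet endpoint of the edge (e,v) faces the subgraph with vertex set W:
  it is strictly closer to W than the emerald endpoint.\<close>
definition violet_faces :: "('e \<times> 'v) set \<Rightarrow> ('e + 'v) set \<Rightarrow> 'e \<Rightarrow> 'v \<Rightarrow> bool" where
  "violet_faces \<Gamma> W e v \<longleftrightarrow> gdist \<Gamma> (Inr v) W < gdist \<Gamma> (Inl e) W"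

definition rpt :: "('e::finite \<times> 'v::finite) \<Rightarrow> real ^ ('e + 'v)" where
  "rpt ev = (\<chi> i. if i = Inl (fst ev) \<or> i = Inr (snd ev) then 1 else 0)"

definition root_polytope :: "('e::finite \<times> 'v::finite) set \<Rightarrow> (real ^ ('e + 'v)) set" where
  "root_polytope G = convex hull (rpt ` G)"

definition simplex_of :: "('e::finite \<times> 'v::finite) set \<Rightarrow> (real ^ ('e + 'v)) set" where
  "simplex_of F = convex hull (rpt ` F)"

text \<open>A triangulation: a set of spanning trees (maximal simplices) whose simplices pairwise
 meet in common faces and cover Q_G.\<close>
definition triangulation :: "('e::finite \<times> 'v::finite) set \<Rightarrow> ('e \<times> 'v) set set \<Rightarrow> bool" where
  "triangulation G \<T> \<longleftrightarrow>
     (\<forall>\<Gamma>\<in>\<T>. spanning_tree G \<Gamma>) \<and>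
     (\<forall>\<Gamma>1\<in>\<T>. \<forall>\<Gamma>2\<in>\<T>. (simplex_of \<Gamma>1 \<inter> simplex_of \<Gamma>2) face_of simplex_of \<Gamma>1 \<and>
                           (simplex_of \<Gamma>1 \<inter> simplex_of \<Gamma>2) face_of simplex_of \<Gamma>2) \<and>
     (\<Union>\<Gamma>\<in>\<T>. simplex_of \<Gamma>) = root_polytope G"

definition face_of_triang :: "('e::finite \<times> 'v::finite) set set \<Rightarrow> (real ^ ('e + 'v)) set \<Rightarrow> bool" where
  "face_of_triang \<T> S \<longleftrightarrow> (\<exists>\<Gamma>\<in>\<T>. S face_of simplex_of \<Gamma>)"

definition interior_face :: "('e::finite \<times> 'v::finite) set \<Rightarrow> ('e \<times> 'v) set set \<Rightarrow> (real ^ ('e + 'v)) set \<Rightarrow> bool" where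
  "interior_face G \<T> S \<longleftrightarrow> face_of_triang \<T> S \<and>
     \<not> S \<subseteq> root_polytope G - rel_interior (root_polytope G)"

end

theory Submission
  imports Defs
begin

text \<open>The simplex \<open>\<sigma>\<close> meets the relative interior of \<open>Q\<^sub>G\<close>, so it contains a point \<open>p\<close>
  with positive barycentric weights that is interior to \<open>Q\<^sub>G\<close>. Move \<open>p\<close> by a small step
  \<open>t d\<close>, where \<open>d\<close> shifts mass from an edge of the component \<open>C\<close> (vertex set \<open>W\<close>) onto
  every vertex outside \<open>C\<close>.
  For a spanning tree \<open>\<Gamma> \<supseteq> \<Sigma>\<close>, the barycentric coordinate of an edge \<open>\<epsilon>\<close> of \<open>\<Gamma>\<close> is the
  pairing with the signed indicator of the side of \<open>\<Gamma> - \<epsilon>\<close> containing the emerald endpoint of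
  \<open>\<epsilon>\<close>. For \<open>\<epsilon> \<in> \<Sigma>\<close> it stays close to the weight of \<open>p\<close>, hence positive; for \<open>\<epsilon> \<notin> \<Sigma>\<close> it
  is \<open>t\<close> times the pairing of \<open>d\<close> with that side, which is nonzero, and positive exactly when
  the side avoids \<open>C\<close>, i.e. when the violet endpoint of \<open>\<epsilon>\<close> faces \<open>C\<close>. So the perturbed point
  lies in the open simplex of \<open>\<Gamma>\<close> iff \<open>\<Gamma>\<close> has the facing property. A maximal simplex of the
  triangulation containing the perturbed point also contains \<open>p\<close>, hence \<open>\<sigma>\<close>, and so has the
  property; two trees with the property contain the perturbed point in their open simplices,
  and as the simplices of the triangulation meet in common faces they coincide.\<close>

section \<open>Signed indicators\<close>

definition csign :: "'e + 'v \<Rightarrow> real" where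
  "csign u = (case u of Inl _ \<Rightarrow> 1 | Inr _ \<Rightarrow> -1)"

text \<open>Pairing with \<open>signed_indicator UNIV\<close> and \<open>signed_indicator (range Inl)\<close> gives the two
  hyperplanes containing \<open>Q\<^sub>G\<close>; pairing with the signed indicator of a side of a tree edge
  (see \<open>side\<close>) gives the barycentric coordinate of that edge.\<close>
definition signed_indicator :: "('e::finite + 'v::finite) set \<Rightarrow> real ^ ('e + 'v)" where
  "signed_indicator K = (\<chi> u. if u \<in> K then csign u else 0)"

lemma csign_sq [simp]: "csign u * csign u = 1"
  by (cases u) (auto simp: csign_def)

lemma rpt_eq_axis: "rpt (e, v) = axis (Inl e) 1 + axis (Inr v) 1"
  by (auto simp: rpt_def vec_eq_iff axis_def)

lemma inj_rpt: "inj rpt"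
proof
  fix a b :: "'e::finite \<times> 'v::finite"
  assume ab: "rpt a = rpt b"
  have "rpt a $ Inl (fst a) = 1" "rpt a $ Inr (snd a) = 1" by (auto simp: rpt_def)
  then have "rpt b $ Inl (fst a) = 1" "rpt b $ Inr (snd a) = 1" by (simp_all add: ab)
  then show "a = b" by (auto simp: rpt_def prod_eq_iff split: if_splits)
qed

lemma inner_rpt_rpt:
  "rpt (e, v) \<bullet> rpt (e', v') = of_bool (e = e') + of_bool (v = v')"
  by (simp add: rpt_eq_axis inner_add_left inner_add_right inner_axis_axis)

lemma inner_signed_indicator_axis [simp]:
  "signed_indicator K \<bullet> axis u 1 = (if u \<in> K then csign u else 0)"
  by (simp add: inner_axis signed_indicator_def)

lemma inner_signed_indicator_rpt:
  "signed_indicator K \<bullet> rpt (e, v) = of_bool (Inl e \<in> K) - of_bool (Inr v \<in> K)"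
  by (simp add: rpt_eq_axis inner_add_right csign_def)

lemma inner_signed_indicator_UNIV_rpt [simp]: "signed_indicator UNIV \<bullet> rpt a = 0"
  by (cases a) (simp add: inner_signed_indicator_rpt)

lemma inner_signed_indicator_Inl_rpt [simp]: "signed_indicator (range Inl) \<bullet> rpt a = 1"
  by (cases a) (auto simp: inner_signed_indicator_rpt)

lemma inner_signed_indicator_sum_rpt:
  "signed_indicator K \<bullet> (\<Sum>a\<in>I. c a *\<^sub>R rpt a) = (\<Sum>a\<in>I. c a * (signed_indicator K \<bullet> rpt a))"
  by (simp add: inner_sum_right)

lemma abs_inner_signed_indicator_le: "\<bar>signed_indicator K \<bullet> y\<bar> \<le> (\<Sum>u\<in>UNIV. \<bar>y $ u\<bar>)"
proof -
  have "\<bar>signed_indicator K \<bullet> y\<bar> \<le> (\<Sum>u\<in>UNIV. \<bar>signed_indicator K $ u * y $ u\<bar>)"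
    unfolding inner_vec_def inner_real_def by (rule sum_abs)
  also have "\<dots> \<le> (\<Sum>u\<in>UNIV. \<bar>y $ u\<bar>)"
    by (intro sum_mono) (auto simp: signed_indicator_def csign_def abs_mult split: sum.split)
  finally show ?thesis .
qed

lemma badj_sym: "badj F x y \<Longrightarrow> badj F y x"
  by (auto simp: badj_def)

lemma breach_sym: "breach F x y \<Longrightarrow> breach F y x"
  unfolding breach_def
  by (induction rule: rtranclp_induct) (auto intro: converse_rtranclp_into_rtranclp badj_sym)

lemma breach_trans: "breach F x y \<Longrightarrow> breach F y z \<Longrightarrow> breach F x z"
  unfolding breach_def by simp

lemma breach_step: "breach F x y \<Longrightarrow> badj F y z \<Longrightarrow> breach F x z"
  unfolding breach_def by simp

lemma breach_mono: "F \<subseteq> F' \<Longrightarrow> breach F x y \<Longrightarrow> breach F' x y"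
  unfolding breach_def badj_def by (erule rtranclp_mono[THEN predicate2D, rotated]) blast

lemma axis_diff_in_span_rpt:
  assumes "breach F x y"
  shows "axis x 1 - (csign x * csign y) *\<^sub>R axis y 1 \<in> span (rpt ` F)"
  using assms unfolding breach_def
proof (induction rule: rtranclp_induct)
  case base
  then show ?case by (simp add: span_zero)
next
  case (step y z)
  obtain e v where "(e, v) \<in> F" and yz: "y = Inl e \<and> z = Inr v \<or> y = Inr v \<and> z = Inl e"
    using step(2) by (auto simp: badj_def)
  then have "axis y 1 + axis z 1 \<in> span (rpt ` F)"
    by (metis add.commute image_eqI rpt_eq_axis span_base)
  then have "(axis x 1 - (csign x * csign y) *\<^sub>R axis y 1)
      + (csign x * csign y) *\<^sub>R (axis y 1 + axis z 1) \<in> span (rpt ` F)"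
    by (rule span_add[OF step(3) span_scale])
  moreover have "csign z = - csign y" using yz by (auto simp: csign_def)
  ultimately show ?case by (simp add: algebra_simps)
qed

text \<open>Modulo \<open>span (rpt ` F)\<close>, every basis vector is congruent to \<open>\<pm>\<close> a fixed emerald one.\<close>
lemma in_span_rpt_if_bconnected:
  fixes F :: "('e::finite \<times> 'v::finite) set"
  assumes "bconnected F" and "signed_indicator UNIV \<bullet> y = 0"
  shows "y \<in> span (rpt ` F)"
proof -
  define e0 :: "'e + 'v" where "e0 = Inl undefined"
  have e0: "csign e0 = 1" by (simp add: e0_def csign_def)
  have basis: "axis u 1 - csign u *\<^sub>R axis e0 1 \<in> span (rpt ` F)" for u
  proof -
    have "axis e0 1 - (csign e0 * csign u) *\<^sub>R axis u 1 \<in> span (rpt ` F)"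
      using assms(1) axis_diff_in_span_rpt unfolding bconnected_def by blast
    then have "(- csign u) *\<^sub>R (axis e0 1 - (csign e0 * csign u) *\<^sub>R axis u 1) \<in> span (rpt ` F)"
      by (rule span_scale)
    then show ?thesis by (simp add: e0 algebra_simps)
  qed
  have balanced: "(\<Sum>u\<in>UNIV. y $ u * csign u) = 0"
    using assms(2) by (simp add: inner_vec_def signed_indicator_def mult.commute)
  have "y = (\<Sum>u\<in>UNIV. (y $ u) *\<^sub>R axis u 1)"
    using basis_expansion[of y] by (simp add: scalar_mult_eq_scaleR)
  also have "\<dots> = (\<Sum>u\<in>UNIV. (y $ u) *\<^sub>R (axis u 1 - csign u *\<^sub>R axis e0 1))"
    using balanced by (simp add: scaleR_diff_right sum_subtractf flip: scaleR_sum_left)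
  also have "\<dots> \<in> span (rpt ` F)"
    by (intro span_sum span_scale basis)
  finally show ?thesis .
qed

lemma rpt_combination_if_bconnected:
  fixes F :: "('e::finite \<times> 'v::finite) set"
  assumes "bconnected F" and "signed_indicator UNIV \<bullet> y = 0"
  obtains c where "y = (\<Sum>a\<in>F. c a *\<^sub>R rpt a)"
proof -
  obtain u where "y = (\<Sum>x\<in>rpt ` F. u x *\<^sub>R x)"
    using in_span_rpt_if_bconnected[OF assms] span_finite[of "rpt ` F"] by auto
  also have "\<dots> = (\<Sum>a\<in>F. u (rpt a) *\<^sub>R rpt a)"
    by (rule sum.reindex_cong[OF inj_on_subset[OF inj_rpt]]) auto
  finally show ?thesis by (rule that)
qed

lemma in_affine_hull_root_polytope:
  fixes G :: "('e::finite \<times> 'v::finite) set"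
  assumes "bconnected G"
    and "signed_indicator UNIV \<bullet> y = 0" and "signed_indicator (range Inl) \<bullet> y = 1"
  shows "y \<in> affine hull root_polytope G"
proof -
  obtain c where c: "y = (\<Sum>a\<in>G. c a *\<^sub>R rpt a)"
    using rpt_combination_if_bconnected[OF assms(1,2)] .
  have inj: "inj_on rpt G" by (rule inj_on_subset[OF inj_rpt]) simp
  have "sum c G = 1" using assms(3) by (simp add: c inner_signed_indicator_sum_rpt)
  then have "sum (\<lambda>x. c (inv_into G rpt x)) (rpt ` G) = 1"
    and "(\<Sum>x\<in>rpt ` G. c (inv_into G rpt x) *\<^sub>R x) = y"
    using inj by (simp_all add: sum.reindex c)
  then show ?thesis unfolding root_polytope_def affine_hull_convex_hull
    by (subst affine_hull_finite) auto
qed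

section \<open>Sides of a tree edge\<close>

definition side :: "('e \<times> 'v) set \<Rightarrow> 'e \<Rightarrow> 'v \<Rightarrow> ('e + 'v) set" where
  "side \<Gamma> e v = {y. breach (\<Gamma> - {(e, v)}) (Inl e) y}"

lemma Inl_in_side: "Inl e \<in> side \<Gamma> e v"
  by (simp add: side_def breach_def)

lemma Inr_notin_side: "cycle_free \<Gamma> \<Longrightarrow> (e, v) \<in> \<Gamma> \<Longrightarrow> Inr v \<notin> side \<Gamma> e v"
  by (simp add: side_def cycle_free_def)

lemma Inl_in_side_iff:
  assumes "(e', v') \<in> \<Gamma>" "(e', v') \<noteq> (e, v)"
  shows "Inl e' \<in> side \<Gamma> e v \<longleftrightarrow> Inr v' \<in> side \<Gamma> e v"
proof -
  have "badj (\<Gamma> - {(e, v)}) (Inl e') (Inr v')" using assms by (auto simp: badj_def)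
  then show ?thesis
    unfolding side_def using breach_step badj_sym by blast
qed

lemma badj_enter_side:
  assumes "badj \<Gamma> x y" "x \<notin> side \<Gamma> e v" "y \<in> side \<Gamma> e v"
  shows "x = Inr v \<and> y = Inl e"
proof -
  obtain e' v' where ev: "(e', v') \<in> \<Gamma>" "x = Inl e' \<and> y = Inr v' \<or> x = Inr v' \<and> y = Inl e'"
    using assms(1) by (auto simp: badj_def)
  show ?thesis
  proof (cases "(e', v') = (e, v)")
    case True
    then show ?thesis using ev assms(2,3) Inl_in_side[of e \<Gamma> v] by auto
  next
    case False
    then show ?thesis using Inl_in_side_iff[OF ev(1) False] ev(2) assms(2,3) by auto
  qed
qed

lemma badj_leave_side:
  assumes "badj \<Gamma> x y" "x \<in> side \<Gamma> e v" "y \<notin> side \<Gamma> e v"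
  shows "x = Inl e \<and> y = Inr v"
  using badj_enter_side[OF badj_sym[OF assms(1)] assms(3,2)] by simp

lemma inner_side_rpt:
  assumes "cycle_free \<Gamma>" "(e, v) \<in> \<Gamma>" "a \<in> \<Gamma>"
  shows "signed_indicator (side \<Gamma> e v) \<bullet> rpt a = of_bool (a = (e, v))"
proof (cases a)
  case (Pair e' v')
  then show ?thesis
    using Inl_in_side_iff[of e' v' \<Gamma> e v] assms Inl_in_side[of e \<Gamma> v] Inr_notin_side[OF assms(1,2)]
    by (auto simp: inner_signed_indicator_rpt)
qed

lemma inner_side_sum_rpt:
  fixes \<Gamma> :: "('e::finite \<times> 'v::finite) set"
  assumes "cycle_free \<Gamma>" "(e, v) \<in> \<Gamma>" "I \<subseteq> \<Gamma>"
  shows "signed_indicator (side \<Gamma> e v) \<bullet> (\<Sum>a\<in>I. c a *\<^sub>R rpt a) = (if (e, v) \<in> I then c (e, v) else 0)"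
proof -
  have "signed_indicator (side \<Gamma> e v) \<bullet> (\<Sum>a\<in>I. c a *\<^sub>R rpt a) = (\<Sum>a\<in>I. c a * of_bool (a = (e, v)))"
    unfolding inner_signed_indicator_sum_rpt
    using inner_side_rpt[OF assms(1,2)] assms(3) by (intro sum.cong) auto
  then show ?thesis by simp
qed

lemma component_side_cases:
  assumes "\<Sigma> \<subseteq> \<Gamma> - {(e, v)}" "W \<in> components \<Sigma>"
  shows "W \<subseteq> side \<Gamma> e v \<or> W \<inter> side \<Gamma> e v = {}"
proof (rule disjCI)
  assume "W \<inter> side \<Gamma> e v \<noteq> {}"
  then obtain y where y: "y \<in> W" "y \<in> side \<Gamma> e v" by blast
  obtain x0 where W: "W = {y. breach \<Sigma> x0 y}" using assms(2) by (auto simp: components_def)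
  show "W \<subseteq> side \<Gamma> e v"
  proof
    fix w assume "w \<in> W"
    then have "breach \<Sigma> y w" using y(1) W by (auto intro: breach_trans breach_sym)
    then have "breach (\<Gamma> - {(e, v)}) y w" using breach_mono assms(1) by blast
    then show "w \<in> side \<Gamma> e v" using y(2) unfolding side_def by (auto intro: breach_trans)
  qed
qed

lemma walk_Cons: "walk F xs \<Longrightarrow> badj F x (hd xs) \<Longrightarrow> walk F (x # xs)"
  unfolding walk_def by (auto simp: nth_Cons hd_conv_nth split: nat.splits)

lemma walk_drop: "walk F xs \<Longrightarrow> i < length xs \<Longrightarrow> walk F (drop i xs)"
  unfolding walk_def by auto

lemma breach_walk:
  assumes "breach F x y"
  obtains xs where "walk F xs" "hd xs = x" "last xs = y"
  using assms unfolding breach_def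
proof (induction arbitrary: thesis rule: converse_rtranclp_induct)
  case base
  show ?case by (rule base[of "[y]"]) (simp_all add: walk_def)
next
  case (step x z)
  obtain xs where xs: "walk F xs" "hd xs = z" "last xs = y" by (rule step.IH)
  then have "xs \<noteq> []" by (simp add: walk_def)
  with xs show ?case using step.hyps(1) by (intro step.prems[of "x # xs"] walk_Cons) simp_all
qed

lemma gdist_attained:
  assumes "breach \<Gamma> x w" "w \<in> W"
  obtains xs where "walk \<Gamma> xs" "hd xs = x" "last xs \<in> W" "length xs = Suc (gdist \<Gamma> x W)"
proof -
  let ?P = "\<lambda>n. \<exists>xs. walk \<Gamma> xs \<and> hd xs = x \<and> last xs \<in> W \<and> length xs = Suc n"
  obtain xs where "walk \<Gamma> xs" "hd xs = x" "last xs = w"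
    using breach_walk[OF assms(1)] .
  then have "?P (length xs - 1)" using assms(2) by (intro exI[of _ xs]) (auto simp: walk_def)
  then have "?P (gdist \<Gamma> x W)" unfolding gdist_def by (rule LeastI)
  then show ?thesis using that by blast
qed

lemma gdist_le:
  "walk \<Gamma> xs \<Longrightarrow> hd xs = x \<Longrightarrow> last xs \<in> W \<Longrightarrow> gdist \<Gamma> x W \<le> length xs - 1"
  unfolding gdist_def walk_def by (rule Least_le) auto

text \<open>If \<open>K \<supseteq> W\<close> can only be entered through \<open>a\<close>, a shortest walk from \<open>b \<notin> K\<close> to \<open>W\<close>
  passes through \<open>a\<close>.\<close>
lemma gdist_less_if_entry:
  assumes conn: "bconnected \<Gamma>"
    and entry: "\<And>x y. badj \<Gamma> x y \<Longrightarrow> x \<notin> K \<Longrightarrow> y \<in> K \<Longrightarrow> y = a"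
    and "b \<notin> K" "W \<subseteq> K" "w \<in> W"
  shows "gdist \<Gamma> a W < gdist \<Gamma> b W"
proof -
  obtain xs where xs: "walk \<Gamma> xs" "hd xs = b" "last xs \<in> W" "length xs = Suc (gdist \<Gamma> b W)"
    using gdist_attained[of \<Gamma> b w W] conn assms(5) unfolding bconnected_def by blast
  have "xs \<noteq> []" using xs(4) by auto
  then have "last xs = xs ! (length xs - 1)" by (rule last_conv_nth)
  then have "xs ! (length xs - 1) \<in> K" using xs(3) assms(4) by auto
  then have "\<exists>i. i < length xs \<and> xs ! i \<in> K" using xs(4) by (intro exI[of _ "length xs - 1"]) simp
  define i where "i = (LEAST i. i < length xs \<and> xs ! i \<in> K)"
  have i: "i < length xs" "xs ! i \<in> K"
    using LeastI_ex[OF \<open>\<exists>i. i < length xs \<and> xs ! i \<in> K\<close>] unfolding i_def by auto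
  have "i \<noteq> 0" using i(2) hd_conv_nth[OF \<open>xs \<noteq> []\<close>] xs(2) assms(3) by (cases i) auto
  have prev: "xs ! (i - 1) \<notin> K"
  proof
    assume "xs ! (i - 1) \<in> K"
    then have "i \<le> i - 1" using i(1) unfolding i_def by (intro Least_le) simp
    then show False using \<open>i \<noteq> 0\<close> by simp
  qed
  have "Suc (i - 1) = i" using \<open>i \<noteq> 0\<close> by simp
  then have "badj \<Gamma> (xs ! (i - 1)) (xs ! i)"
    using xs(1) i(1) unfolding walk_def by (metis lessI)
  then have "xs ! i = a" using entry prev i(2) by simp
  then have "gdist \<Gamma> a W \<le> length (drop i xs) - 1"
    using xs i walk_drop[OF xs(1) i(1)] by (intro gdist_le) (auto simp: hd_drop_conv_nth last_drop)
  then show ?thesis using \<open>i \<noteq> 0\<close> i(1) xs(4) by simp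
qed

lemma violet_faces_iff_side:
  assumes "cycle_free \<Gamma>" "bconnected \<Gamma>" "(e, v) \<in> \<Gamma>"
    and "\<Sigma> \<subseteq> \<Gamma> - {(e, v)}" "W \<in> components \<Sigma>"
  shows "violet_faces \<Gamma> W e v \<longleftrightarrow> W \<inter> side \<Gamma> e v = {}"
proof -
  obtain x0 where "x0 \<in> W" using assms(5) by (auto simp: components_def breach_def)
  show ?thesis
  proof
    assume "W \<inter> side \<Gamma> e v = {}"
    then show "violet_faces \<Gamma> W e v"
      unfolding violet_faces_def
    proof (intro gdist_less_if_entry[OF assms(2), where K = "- side \<Gamma> e v"])
      fix x y assume "badj \<Gamma> x y" "x \<notin> - side \<Gamma> e v" "y \<in> - side \<Gamma> e v"
      then show "y = Inr v" using badj_leave_side[of \<Gamma> x y e v] by simp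
    qed (use Inl_in_side \<open>x0 \<in> W\<close> in auto)
  next
    assume violet: "violet_faces \<Gamma> W e v"
    have "\<not> W \<subseteq> side \<Gamma> e v"
    proof
      assume "W \<subseteq> side \<Gamma> e v"
      then have "gdist \<Gamma> (Inl e) W < gdist \<Gamma> (Inr v) W"
      proof (intro gdist_less_if_entry[OF assms(2), where K = "side \<Gamma> e v"])
        fix x y assume "badj \<Gamma> x y" "x \<notin> side \<Gamma> e v" "y \<in> side \<Gamma> e v"
        then show "y = Inl e" using badj_enter_side[of \<Gamma> x y e v] by simp
      qed (use Inr_notin_side[OF assms(1,3)] \<open>x0 \<in> W\<close> in auto)
      then show False using violet unfolding violet_faces_def by simp
    qed
    then show "W \<inter> side \<Gamma> e v = {}" using component_side_cases[OF assms(4,5)] by simp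
  qed
qed

lemma simplex_of_iff:
  fixes F :: "('e::finite \<times> 'v::finite) set"
  shows "y \<in> simplex_of F \<longleftrightarrow>
    (\<exists>\<mu>. (\<forall>a\<in>F. 0 \<le> \<mu> a) \<and> sum \<mu> F = 1 \<and> y = (\<Sum>a\<in>F. \<mu> a *\<^sub>R rpt a))"
proof
  have inj: "inj_on rpt F" by (rule inj_on_subset[OF inj_rpt]) simp
  assume "y \<in> simplex_of F"
  then obtain u where "\<forall>x\<in>rpt ` F. 0 \<le> u x" "sum u (rpt ` F) = 1" "(\<Sum>x\<in>rpt ` F. u x *\<^sub>R x) = y"
    unfolding simplex_of_def by (auto simp: convex_hull_finite)
  then show "\<exists>\<mu>. (\<forall>a\<in>F. 0 \<le> \<mu> a) \<and> sum \<mu> F = 1 \<and> y = (\<Sum>a\<in>F. \<mu> a *\<^sub>R rpt a)"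
    using inj by (intro exI[of _ "\<lambda>a. u (rpt a)"]) (auto simp: sum.reindex)
next
  assume "\<exists>\<mu>. (\<forall>a\<in>F. 0 \<le> \<mu> a) \<and> sum \<mu> F = 1 \<and> y = (\<Sum>a\<in>F. \<mu> a *\<^sub>R rpt a)"
  then obtain \<mu> where \<mu>: "\<forall>a\<in>F. 0 \<le> \<mu> a" "sum \<mu> F = 1" "y = (\<Sum>a\<in>F. \<mu> a *\<^sub>R rpt a)"
    by blast
  show "y \<in> simplex_of F" unfolding simplex_of_def \<mu>(3)
    by (rule convex_sum) (use \<mu> in \<open>auto intro: hull_inc\<close>)
qed

text \<open>Distinct vertices of \<open>Q\<^sub>G\<close> have inner product at most 1, while \<open>\<bar>rpt a\<bar>\<^sup>2 = 2\<close>.\<close>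
lemma rpt_in_simplex_ofD:
  fixes F :: "('e::finite \<times> 'v::finite) set"
  assumes "rpt a \<in> simplex_of F"
  shows "a \<in> F"
proof (rule ccontr)
  assume "a \<notin> F"
  obtain \<mu> where \<mu>: "\<forall>b\<in>F. 0 \<le> \<mu> b" "sum \<mu> F = 1" "rpt a = (\<Sum>b\<in>F. \<mu> b *\<^sub>R rpt b)"
    using assms simplex_of_iff by blast
  have le1: "rpt a \<bullet> rpt b \<le> 1" if "b \<in> F" for b
    using that \<open>a \<notin> F\<close> by (cases a, cases b) (auto simp: inner_rpt_rpt)
  have "2 = rpt a \<bullet> rpt a" by (cases a) (simp add: inner_rpt_rpt)
  also have "\<dots> = (\<Sum>b\<in>F. \<mu> b * (rpt a \<bullet> rpt b))"
    by (subst (2) \<mu>(3)) (simp add: inner_sum_right)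
  also have "\<dots> \<le> (\<Sum>b\<in>F. \<mu> b)"
    using \<mu>(1) le1 by (intro sum_mono) (simp add: mult_left_le)
  finally show False using \<mu>(2) by simp
qed

definition positive_combination :: "('e::finite \<times> 'v::finite) set \<Rightarrow> real ^ ('e + 'v) \<Rightarrow> bool" where
  "positive_combination F y \<longleftrightarrow>
    (\<exists>c. (\<forall>a\<in>F. 0 < c a) \<and> sum c F = 1 \<and> y = (\<Sum>a\<in>F. c a *\<^sub>R rpt a))"

lemma positive_combination_in_simplex_of:
  "positive_combination F y \<Longrightarrow> y \<in> simplex_of F"
  unfolding positive_combination_def simplex_of_iff by (auto intro: less_imp_le)

lemma positive_combination_in_rel_interior:
  assumes "positive_combination F y"
  shows "y \<in> rel_interior (simplex_of F)"
proof -
  obtain c where c: "\<forall>a\<in>F. 0 < c a" "sum c F = 1" "y = (\<Sum>a\<in>F. c a *\<^sub>R rpt a)"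
    using assms unfolding positive_combination_def by blast
  have inj: "inj_on rpt F" by (rule inj_on_subset[OF inj_rpt]) simp
  let ?u = "\<lambda>x. c (inv_into F rpt x)"
  have "(\<forall>x\<in>rpt ` F. 0 < ?u x) \<and> sum ?u (rpt ` F) = 1 \<and> (\<Sum>x\<in>rpt ` F. ?u x *\<^sub>R x) = y"
    using c inj by (simp add: sum.reindex)
  then have "y \<in> {y. \<exists>u. (\<forall>x\<in>rpt ` F. 0 < u x) \<and> sum u (rpt ` F) = 1 \<and> (\<Sum>x\<in>rpt ` F. u x *\<^sub>R x) = y}"
    by (intro CollectI exI)
  then show ?thesis unfolding simplex_of_def
    by (rule subsetD[OF explicit_subset_rel_interior_convex_hull_minimal[OF finite_imageI[OF finite]]])
qed

lemma positive_combination_barycentre: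
  fixes F :: "('e::finite \<times> 'v::finite) set"
  assumes "F \<noteq> {}"
  shows "positive_combination F (\<Sum>a\<in>F. (1 / card F) *\<^sub>R rpt a)"
  unfolding positive_combination_def using assms
  by (intro exI[of _ "\<lambda>_. 1 / card F"]) (simp add: card_gt_0_iff)

lemma positive_combination_midpoint:
  assumes "positive_combination F b" "y \<in> simplex_of F"
  shows "positive_combination F (midpoint b y)"
proof -
  obtain c where c: "\<forall>a\<in>F. 0 < c a" "sum c F = 1" "b = (\<Sum>a\<in>F. c a *\<^sub>R rpt a)"
    using assms(1) unfolding positive_combination_def by blast
  obtain \<mu> where \<mu>: "\<forall>a\<in>F. 0 \<le> \<mu> a" "sum \<mu> F = 1" "y = (\<Sum>a\<in>F. \<mu> a *\<^sub>R rpt a)"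
    using assms(2) simplex_of_iff by blast
  have "midpoint b y = (\<Sum>a\<in>F. (1/2) *\<^sub>R (c a *\<^sub>R rpt a) + (1/2) *\<^sub>R (\<mu> a *\<^sub>R rpt a))"
    by (simp add: midpoint_def c(3) \<mu>(3) sum.distrib scaleR_add_right scaleR_sum_right)
  also have "\<dots> = (\<Sum>a\<in>F. ((c a + \<mu> a) / 2) *\<^sub>R rpt a)"
    by (intro sum.cong refl) (simp add: scaleR_add_left add_divide_distrib)
  finally have "midpoint b y = (\<Sum>a\<in>F. ((c a + \<mu> a) / 2) *\<^sub>R rpt a)" .
  moreover have "sum (\<lambda>a. (c a + \<mu> a) / 2) F = 1"
    using c(2) \<mu>(2) by (simp add: sum.distrib flip: sum_divide_distrib)
  ultimately show ?thesis unfolding positive_combination_def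
    using c(1) \<mu>(1) by (intro exI[of _ "\<lambda>a. (c a + \<mu> a) / 2"]) (auto intro: add_pos_nonneg)
qed

lemma subset_if_positive_combination:
  assumes tri: "triangulation G \<T>" and "\<Gamma>0 \<in> \<T>" "\<Gamma> \<in> \<T>" "F \<subseteq> \<Gamma>0"
    and "positive_combination F p" "p \<in> simplex_of \<Gamma>"
  shows "F \<subseteq> \<Gamma>"
proof
  fix a assume "a \<in> F"
  have face: "simplex_of \<Gamma>0 \<inter> simplex_of \<Gamma> face_of simplex_of \<Gamma>0"
    using tri assms(2,3) unfolding triangulation_def by blast
  have sub: "simplex_of F \<subseteq> simplex_of \<Gamma>0"
    unfolding simplex_of_def using assms(4) by (intro hull_mono image_mono)
  have "p \<in> rel_interior (simplex_of F)" by (rule positive_combination_in_rel_interior) fact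
  moreover have "p \<in> simplex_of \<Gamma>0"
    using sub positive_combination_in_simplex_of[OF assms(5)] by blast
  ultimately have "simplex_of F \<subseteq> simplex_of \<Gamma>0 \<inter> simplex_of \<Gamma>"
    using subset_of_face_of[OF face sub] assms(6) by blast
  moreover have "rpt a \<in> simplex_of F"
    unfolding simplex_of_def using \<open>a \<in> F\<close> by (intro hull_inc imageI)
  ultimately show "a \<in> \<Gamma>" using rpt_in_simplex_ofD by blast
qed

lemma tree_coordinate_nonneg:
  fixes \<Gamma> :: "('e::finite \<times> 'v::finite) set"
  assumes "cycle_free \<Gamma>" "(e, v) \<in> \<Gamma>" "y \<in> simplex_of \<Gamma>"
  shows "0 \<le> signed_indicator (side \<Gamma> e v) \<bullet> y"
proof -
  obtain \<mu> where "\<forall>a\<in>\<Gamma>. 0 \<le> \<mu> a" "y = (\<Sum>a\<in>\<Gamma>. \<mu> a *\<^sub>R rpt a)"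
    using assms(3) simplex_of_iff by blast
  then show ?thesis using inner_side_sum_rpt[OF assms(1,2) order_refl] assms(2) by simp
qed

lemma positive_combination_if_tree_coordinates_pos:
  fixes \<Gamma> :: "('e::finite \<times> 'v::finite) set"
  assumes "cycle_free \<Gamma>" "bconnected \<Gamma>"
    and "signed_indicator UNIV \<bullet> y = 0" "signed_indicator (range Inl) \<bullet> y = 1"
    and pos: "\<And>e v. (e, v) \<in> \<Gamma> \<Longrightarrow> 0 < signed_indicator (side \<Gamma> e v) \<bullet> y"
  shows "positive_combination \<Gamma> y"
proof -
  obtain c where c: "y = (\<Sum>a\<in>\<Gamma>. c a *\<^sub>R rpt a)"
    using rpt_combination_if_bconnected[OF assms(2,3)] .
  have "0 < c a" if "a \<in> \<Gamma>" for a
    using pos[of "fst a" "snd a"] inner_side_sum_rpt[OF assms(1) _ order_refl, of "fst a" "snd a" c] that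
    by (simp add: c)
  moreover have "sum c \<Gamma> = 1" using assms(4) by (simp add: c inner_signed_indicator_sum_rpt)
  ultimately show ?thesis unfolding positive_combination_def using c by blast
qed

section \<open>Interior points of the root polytope\<close>

lemma axis_inner_nonneg_if_in_simplex_of:
  fixes F :: "('e::finite \<times> 'v::finite) set"
  assumes "y \<in> simplex_of F"
  shows "0 \<le> axis u 1 \<bullet> y"
proof -
  obtain \<mu> where "\<forall>a\<in>F. 0 \<le> \<mu> a" "y = (\<Sum>a\<in>F. \<mu> a *\<^sub>R rpt a)"
    using assms simplex_of_iff by blast
  moreover have "0 \<le> axis u 1 \<bullet> rpt a" for a
    by (cases a) (simp add: rpt_eq_axis inner_add_right inner_axis_axis)
  ultimately show ?thesis by (simp add: inner_sum_right sum_nonneg)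
qed

text \<open>Pushing \<open>z\<close> slightly beyond itself, away from a vertex of \<open>Q\<^sub>G\<close> incident to \<open>u\<close>, stays in
  \<open>Q\<^sub>G\<close>, which lies in the positive orthant; so the \<open>u\<close>-coordinate of \<open>z\<close> cannot vanish.\<close>
lemma vertex_covered_if_rel_interior:
  fixes G \<Sigma> :: "('e::finite \<times> 'v::finite) set"
  assumes conn: "bconnected G"
    and z: "z \<in> simplex_of \<Sigma>" "z \<in> rel_interior (root_polytope G)"
  shows "\<exists>e v. (e, v) \<in> \<Sigma> \<and> (u = Inl e \<or> u = Inr v)"
proof (rule ccontr)
  assume uncovered: "\<not> ?thesis"
  obtain \<mu> where \<mu>: "z = (\<Sum>a\<in>\<Sigma>. \<mu> a *\<^sub>R rpt a)"
    using z(1) simplex_of_iff by blast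
  have "axis u 1 \<bullet> rpt a = 0" if "a \<in> \<Sigma>" for a
    using that uncovered by (cases a) (auto simp: rpt_eq_axis inner_add_right inner_axis_axis)
  then have z0: "axis u 1 \<bullet> z = 0" by (simp add: \<mu> inner_sum_right)
  define u' :: "'e + 'v" where "u' = (case u of Inl _ \<Rightarrow> Inr undefined | Inr _ \<Rightarrow> Inl undefined)"
  have "u \<noteq> u'" by (cases u) (auto simp: u'_def)
  moreover have "breach G u u'" using conn by (simp add: bconnected_def)
  ultimately obtain y where "badj G u y" unfolding breach_def by (metis converse_rtranclpE)
  then obtain e v where ev: "(e, v) \<in> G" "u = Inl e \<or> u = Inr v" by (auto simp: badj_def)
  have one: "axis u 1 \<bullet> rpt (e, v) = 1"
    using ev(2) by (auto simp: rpt_eq_axis inner_add_right inner_axis_axis)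
  have "rpt (e, v) \<in> affine hull root_polytope G"
    unfolding root_polytope_def using ev(1) by (intro hull_inc imageI)
  then obtain s where "s > 1" "(1 - s) *\<^sub>R rpt (e, v) + s *\<^sub>R z \<in> simplex_of G"
    using convex_rel_interior_if2[OF _ z(2)] unfolding root_polytope_def simplex_of_def
    by (metis convex_convex_hull)
  then have "0 \<le> axis u 1 \<bullet> ((1 - s) *\<^sub>R rpt (e, v) + s *\<^sub>R z)"
    by (intro axis_inner_nonneg_if_in_simplex_of)
  then show False using one z0 \<open>s > 1\<close> by (simp add: inner_add_right)
qed

lemma simplex_of_subset_root_polytope: "F \<subseteq> G \<Longrightarrow> simplex_of F \<subseteq> root_polytope G"
  unfolding simplex_of_def root_polytope_def by (intro hull_mono image_mono)

lemma positive_combination_in_rel_interior_root_polytope: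
  fixes G \<Sigma> :: "('e::finite \<times> 'v::finite) set"
  assumes "\<Sigma> \<subseteq> G" "z \<in> simplex_of \<Sigma>" "z \<in> rel_interior (root_polytope G)"
  obtains p where "positive_combination \<Sigma> p" "p \<in> rel_interior (root_polytope G)"
proof -
  have "\<Sigma> \<noteq> {}" using assms(2) by (auto simp: simplex_of_def)
  define b where "b = (\<Sum>a\<in>\<Sigma>. (1 / card \<Sigma>) *\<^sub>R rpt a)"
  have b: "positive_combination \<Sigma> b"
    unfolding b_def using \<open>\<Sigma> \<noteq> {}\<close> by (rule positive_combination_barycentre)
  have "b \<in> closure (root_polytope G)"
    using positive_combination_in_simplex_of[OF b] simplex_of_subset_root_polytope[OF assms(1)]
      closure_subset by blast
  then have "b - (1/2) *\<^sub>R (b - z) \<in> rel_interior (root_polytope G)"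
    using assms(3) unfolding root_polytope_def
    by (intro rel_interior_closure_convex_shrink) auto
  moreover have "b - (1/2) *\<^sub>R (b - z) = midpoint b z"
    by (simp add: midpoint_def vec_eq_iff field_simps)
  ultimately show ?thesis
    using that positive_combination_midpoint[OF b assms(2)] by simp
qed

section \<open>The perturbation\<close>

text \<open>The direction along which the interior point of \<open>\<sigma>\<close> is pushed off: it moves mass
  from the anchor edge \<open>(e, v)\<close> of \<open>W\<close> onto every vertex outside \<open>W\<close>.\<close>
definition anchor :: "'e \<Rightarrow> 'v \<Rightarrow> 'e + 'v \<Rightarrow> 'e + 'v" where
  "anchor e v u = (case u of Inl _ \<Rightarrow> Inl e | Inr _ \<Rightarrow> Inr v)"

definition push_out :: "('e::finite + 'v::finite) set \<Rightarrow> 'e \<Rightarrow> 'v \<Rightarrow> real ^ ('e + 'v)" where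
  "push_out W e v = (\<Sum>u\<in>-W. csign u *\<^sub>R (axis u 1 - axis (anchor e v u) 1))"

lemma inner_signed_indicator_push_out:
  "signed_indicator K \<bullet> push_out W e v = (\<Sum>u\<in>-W. of_bool (u \<in> K) - of_bool (anchor e v u \<in> K))"
  unfolding push_out_def inner_sum_right
  by (intro sum.cong refl) (auto simp: inner_diff_right anchor_def csign_def split: sum.split)

lemma inner_signed_indicator_UNIV_push_out: "signed_indicator UNIV \<bullet> push_out W e v = 0"
  by (simp add: inner_signed_indicator_push_out)

lemma inner_signed_indicator_Inl_push_out: "signed_indicator (range Inl) \<bullet> push_out W e v = 0"
  unfolding inner_signed_indicator_push_out
  by (intro sum.neutral) (auto simp: anchor_def split: sum.split)

lemma inner_push_out_if_disjoint:
  assumes "Inl e \<in> W" "Inr v \<in> W" "K \<inter> W = {}"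
  shows "signed_indicator K \<bullet> push_out W e v = real (card K)"
proof -
  have "anchor e v u \<notin> K" for u using assms by (auto simp: anchor_def split: sum.split)
  then have "signed_indicator K \<bullet> push_out W e v = card (- W \<inter> K)"
    by (simp add: inner_signed_indicator_push_out)
  also have "- W \<inter> K = K" using assms(3) by blast
  finally show ?thesis .
qed

lemma inner_push_out_if_superset:
  assumes "Inl e \<in> W" "Inr v \<in> W" "W \<subseteq> K"
  shows "signed_indicator K \<bullet> push_out W e v = - real (card (- K))"
proof -
  have "anchor e v u \<in> K" for u using assms by (auto simp: anchor_def split: sum.split)
  then have "signed_indicator K \<bullet> push_out W e v = (\<Sum>u\<in>-W. - of_bool (u \<notin> K))"
    unfolding inner_signed_indicator_push_out by (intro sum.cong) auto
  also have "\<dots> = - card (- W \<inter> {u. u \<notin> K})" by (simp add: sum_negf)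
  also have "- W \<inter> {u. u \<notin> K} = - K" using assms(3) by blast
  finally show ?thesis by simp
qed

lemma finite_closed_sets_near_point:
  fixes p :: "'a::metric_space"
  assumes "finite \<S>" "\<And>S. S \<in> \<S> \<Longrightarrow> closed S"
  obtains r where "0 < r" "\<And>S y. S \<in> \<S> \<Longrightarrow> y \<in> S \<Longrightarrow> dist p y < r \<Longrightarrow> p \<in> S"
proof -
  have "closed (\<Union>{S \<in> \<S>. p \<notin> S})" using assms by (intro closed_Union) auto
  moreover have "p \<notin> \<Union>{S \<in> \<S>. p \<notin> S}" by blast
  ultimately obtain r where "0 < r" "ball p r \<subseteq> - \<Union>{S \<in> \<S>. p \<notin> S}"
    using open_contains_ball[of "- \<Union>{S \<in> \<S>. p \<notin> S}"] open_Compl by blast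
  then show ?thesis using that[of r] by (auto simp: subset_iff)
qed

lemma exists_small_step:
  fixes d :: "'a::real_normed_vector"
  assumes "0 < r" "finite A" "\<And>a. a \<in> A \<Longrightarrow> 0 < m a"
  obtains t :: real where "0 < t" "norm (t *\<^sub>R d) < r" "\<And>a. a \<in> A \<Longrightarrow> t * B < m a"
proof -
  have lim: "((\<lambda>t. norm (t *\<^sub>R d)) \<longlongrightarrow> 0) (at_right 0)" "((\<lambda>t. t * B) \<longlongrightarrow> 0) (at_right 0)"
    by (auto intro!: tendsto_eq_intros)
  have "\<forall>\<^sub>F t in at_right 0. norm (t *\<^sub>R d) < r"
    using order_tendstoD(2)[OF lim(1) assms(1)] .
  moreover have "\<forall>\<^sub>F t in at_right 0. \<forall>a\<in>A. t * B < m a"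
    using assms(2,3) by (intro eventually_ball_finite ballI order_tendstoD(2)[OF lim(2)])
  ultimately have "\<forall>\<^sub>F t in at_right 0. 0 < t \<and> norm (t *\<^sub>R d) < r \<and> (\<forall>a\<in>A. t * B < m a)"
    by (intro eventually_conj eventually_at_right_less)
  then show ?thesis using that eventually_happens'[OF trivial_limit_at_right_real] by blast
qed

lemma subset_if_simplex_of_subset:
  fixes F F' :: "('e::finite \<times> 'v::finite) set"
  assumes "simplex_of F \<subseteq> simplex_of F'"
  shows "F \<subseteq> F'"
proof
  fix a assume "a \<in> F"
  then have "rpt a \<in> simplex_of F" unfolding simplex_of_def by (intro hull_inc imageI)
  then show "a \<in> F'" using assms rpt_in_simplex_ofD by blast
qed

lemma component_contains_edge:
  fixes G \<Sigma> :: "('e::finite \<times> 'v::finite) set"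
  assumes "bconnected G" "z \<in> simplex_of \<Sigma>" "z \<in> rel_interior (root_polytope G)"
    and "W \<in> components \<Sigma>"
  obtains e v where "Inl e \<in> W" "Inr v \<in> W"
proof -
  obtain x0 where W: "W = {y. breach \<Sigma> x0 y}" using assms(4) by (auto simp: components_def)
  obtain e v where ev: "(e, v) \<in> \<Sigma>" "x0 = Inl e \<or> x0 = Inr v"
    using vertex_covered_if_rel_interior[OF assms(1-3)] by blast
  then have "badj \<Sigma> (Inl e) (Inr v)" "badj \<Sigma> (Inr v) (Inl e)" by (auto simp: badj_def)
  then have "breach \<Sigma> x0 (Inl e) \<and> breach \<Sigma> x0 (Inr v)"
    using ev(2) by (auto simp: breach_def)
  then show ?thesis using that W by blast
qed

lemma near_rel_interior_point:
  fixes G :: "('e::finite \<times> 'v::finite) set"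
  assumes conn: "bconnected G" and tri: "triangulation G \<T>"
    and p: "p \<in> rel_interior (root_polytope G)"
  obtains r where "0 < r"
    and "\<And>q. dist p q < r \<Longrightarrow> signed_indicator UNIV \<bullet> q = 0 \<Longrightarrow>
           signed_indicator (range Inl) \<bullet> q = 1 \<Longrightarrow> q \<in> root_polytope G"
    and "\<And>\<Gamma> q. \<Gamma> \<in> \<T> \<Longrightarrow> q \<in> simplex_of \<Gamma> \<Longrightarrow> dist p q < r \<Longrightarrow> p \<in> simplex_of \<Gamma>"
proof -
  obtain r1 where r1: "0 < r1" "ball p r1 \<inter> affine hull root_polytope G \<subseteq> root_polytope G"
    using p mem_rel_interior_ball by blast
  have "finite \<T>"
    using tri finite_subset[of \<T> "Pow G"] by (auto simp: triangulation_def spanning_tree_def)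
  moreover have "closed (simplex_of \<Gamma>)" for \<Gamma>
    unfolding simplex_of_def by (intro compact_imp_closed finite_imp_compact_convex_hull) simp
  ultimately obtain r2 where r2: "0 < r2"
    "\<And>S q. S \<in> simplex_of ` \<T> \<Longrightarrow> q \<in> S \<Longrightarrow> dist p q < r2 \<Longrightarrow> p \<in> S"
    using finite_closed_sets_near_point[of "simplex_of ` \<T>" p] by blast
  show ?thesis
  proof (rule that[of "min r1 r2"])
    fix q assume "dist p q < min r1 r2"
      "signed_indicator UNIV \<bullet> q = 0" "signed_indicator (range Inl) \<bullet> q = 1"
    then show "q \<in> root_polytope G"
      using r1(2) in_affine_hull_root_polytope[OF conn] by auto
  qed (use r1(1) r2 in auto)
qed

lemma tree_coordinate_push_out_sign:
  fixes \<Gamma> \<Sigma> :: "('e::finite \<times> 'v::finite) set"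
  assumes "cycle_free \<Gamma>" "(e, v) \<in> \<Gamma>" "\<Sigma> \<subseteq> \<Gamma> - {(e, v)}" "W \<in> components \<Sigma>"
    and "Inl e1 \<in> W" "Inr v1 \<in> W"
  defines "x \<equiv> signed_indicator (side \<Gamma> e v) \<bullet> push_out W e1 v1"
  shows "(0 < x \<longleftrightarrow> W \<inter> side \<Gamma> e v = {}) \<and> x \<noteq> 0"
proof (cases "W \<inter> side \<Gamma> e v = {}")
  case True
  then have "x = real (card (side \<Gamma> e v))"
    unfolding x_def using assms(5,6) by (intro inner_push_out_if_disjoint) auto
  then have "0 < x" using Inl_in_side[of e \<Gamma> v] by (auto simp: card_gt_0_iff)
  then show ?thesis using True by simp
next
  case False
  then have "W \<subseteq> side \<Gamma> e v" using component_side_cases[OF assms(3,4)] by simp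
  then have "x = - real (card (- side \<Gamma> e v))"
    unfolding x_def by (intro inner_push_out_if_superset assms(5,6))
  then have "x < 0" using Inr_notin_side[OF assms(1,2)] by (auto simp: card_gt_0_iff)
  then show ?thesis using False by simp
qed

lemma tree_coordinates_perturbation:
  fixes \<Gamma> \<Sigma> :: "('e::finite \<times> 'v::finite) set"
  assumes \<Gamma>: "cycle_free \<Gamma>" "\<Sigma> \<subseteq> \<Gamma>" and W: "W \<in> components \<Sigma>" "Inl e1 \<in> W" "Inr v1 \<in> W"
    and small: "0 < t" "\<And>a. a \<in> \<Sigma> \<Longrightarrow> t * (\<Sum>u\<in>UNIV. \<bar>push_out W e1 v1 $ u\<bar>) < w a"
  defines "q \<equiv> (\<Sum>a\<in>\<Sigma>. w a *\<^sub>R rpt a) + t *\<^sub>R push_out W e1 v1"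
  shows "\<And>e v. (e, v) \<in> \<Sigma> \<Longrightarrow> 0 < signed_indicator (side \<Gamma> e v) \<bullet> q"
    and "\<And>e v. (e, v) \<in> \<Gamma> - \<Sigma> \<Longrightarrow>
      (0 < signed_indicator (side \<Gamma> e v) \<bullet> q \<longleftrightarrow> W \<inter> side \<Gamma> e v = {}) \<and>
      signed_indicator (side \<Gamma> e v) \<bullet> q \<noteq> 0"
proof -
  let ?x = "\<lambda>e v. signed_indicator (side \<Gamma> e v) \<bullet> push_out W e1 v1"
  have coord: "signed_indicator (side \<Gamma> e v) \<bullet> q = (if (e, v) \<in> \<Sigma> then w (e, v) else 0) + t * ?x e v"
    if "(e, v) \<in> \<Gamma>" for e v
    using inner_side_sum_rpt[OF \<Gamma>(1) that \<Gamma>(2)] by (simp add: q_def inner_add_right)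
  show "0 < signed_indicator (side \<Gamma> e v) \<bullet> q" if "(e, v) \<in> \<Sigma>" for e v
  proof -
    have "\<bar>t * ?x e v\<bar> \<le> t * (\<Sum>u\<in>UNIV. \<bar>push_out W e1 v1 $ u\<bar>)"
      using small(1) abs_inner_signed_indicator_le by (simp add: abs_mult)
    then show ?thesis using coord small(2)[OF that] that \<Gamma>(2) by auto
  qed
  show "(0 < signed_indicator (side \<Gamma> e v) \<bullet> q \<longleftrightarrow> W \<inter> side \<Gamma> e v = {}) \<and>
      signed_indicator (side \<Gamma> e v) \<bullet> q \<noteq> 0" if "(e, v) \<in> \<Gamma> - \<Sigma>" for e v
  proof -
    have "\<Sigma> \<subseteq> \<Gamma> - {(e, v)}" using that \<Gamma>(2) by blast
    then show ?thesis
      using tree_coordinate_push_out_sign[OF \<Gamma>(1) _ _ W] coord that small(1)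
      by (auto simp: zero_less_mult_iff)
  qed
qed

locale perturbed_point =
  fixes G \<Sigma> :: "('e::finite \<times> 'v::finite) set"
    and \<T> :: "('e \<times> 'v) set set"
    and W :: "('e + 'v) set"
    and q :: "real ^ ('e + 'v)"
  assumes triangulation: "triangulation G \<T>"
    and component: "W \<in> components \<Sigma>"
    and in_root_polytope: "q \<in> root_polytope G"
    and carrier_contains: "\<And>\<Gamma>. \<Gamma> \<in> \<T> \<Longrightarrow> q \<in> simplex_of \<Gamma> \<Longrightarrow> \<Sigma> \<subseteq> \<Gamma>"
    and hyperplane_UNIV: "signed_indicator UNIV \<bullet> q = 0"
    and hyperplane_Inl: "signed_indicator (range Inl) \<bullet> q = 1"
    and coordinate_pos: "\<And>\<Gamma> e v. cycle_free \<Gamma> \<Longrightarrow> \<Sigma> \<subseteq> \<Gamma> \<Longrightarrow> (e, v) \<in> \<Sigma> \<Longrightarrow>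
           0 < signed_indicator (side \<Gamma> e v) \<bullet> q"
    and coordinate_sign: "\<And>\<Gamma> e v. cycle_free \<Gamma> \<Longrightarrow> \<Sigma> \<subseteq> \<Gamma> \<Longrightarrow> (e, v) \<in> \<Gamma> - \<Sigma> \<Longrightarrow>
           (0 < signed_indicator (side \<Gamma> e v) \<bullet> q \<longleftrightarrow> W \<inter> side \<Gamma> e v = {}) \<and>
           signed_indicator (side \<Gamma> e v) \<bullet> q \<noteq> 0"

lemma interior_face_weights:
  fixes G \<Sigma> :: "('e::finite \<times> 'v::finite) set"
  assumes conn: "bconnected G" and "\<Sigma> \<subseteq> G"
    and face: "interior_face G \<T> (simplex_of \<Sigma>)" and W: "W \<in> components \<Sigma>"
  obtains \<Gamma>0 w e1 v1 where "\<Gamma>0 \<in> \<T>" "\<Sigma> \<subseteq> \<Gamma>0"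
    and "\<forall>a\<in>\<Sigma>. 0 < w a" "sum w \<Sigma> = 1"
    and "(\<Sum>a\<in>\<Sigma>. w a *\<^sub>R rpt a) \<in> rel_interior (root_polytope G)"
    and "Inl e1 \<in> W" "Inr v1 \<in> W"
proof -
  obtain z where z: "z \<in> simplex_of \<Sigma>" "z \<in> rel_interior (root_polytope G)"
    using face simplex_of_subset_root_polytope[OF \<open>\<Sigma> \<subseteq> G\<close>] unfolding interior_face_def by blast
  obtain \<Gamma>0 where "\<Gamma>0 \<in> \<T>" "simplex_of \<Sigma> face_of simplex_of \<Gamma>0"
    using face unfolding interior_face_def face_of_triang_def by blast
  then have \<Gamma>0: "\<Gamma>0 \<in> \<T>" "\<Sigma> \<subseteq> \<Gamma>0"
    using subset_if_simplex_of_subset[OF face_of_imp_subset] by blast+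
  obtain p where p: "positive_combination \<Sigma> p" "p \<in> rel_interior (root_polytope G)"
    using positive_combination_in_rel_interior_root_polytope[OF \<open>\<Sigma> \<subseteq> G\<close> z] .
  moreover obtain e1 v1 where "Inl e1 \<in> W" "Inr v1 \<in> W"
    using component_contains_edge[OF conn z W] .
  ultimately show ?thesis
    using that[OF \<Gamma>0] unfolding positive_combination_def by blast
qed

lemma exists_perturbed_point:
  fixes G \<Sigma> :: "('e::finite \<times> 'v::finite) set"
  assumes conn: "bconnected G" and tri: "triangulation G \<T>" and "\<Sigma> \<subseteq> G"
    and face: "interior_face G \<T> (simplex_of \<Sigma>)" and W: "W \<in> components \<Sigma>"
  obtains q where "perturbed_point G \<Sigma> \<T> W q"
proof -
  obtain \<Gamma>0 w e1 v1 where \<Gamma>0: "\<Gamma>0 \<in> \<T>" "\<Sigma> \<subseteq> \<Gamma>0"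
    and w: "\<forall>a\<in>\<Sigma>. 0 < w a" "sum w \<Sigma> = 1"
    and p: "(\<Sum>a\<in>\<Sigma>. w a *\<^sub>R rpt a) \<in> rel_interior (root_polytope G)"
    and anchor: "Inl e1 \<in> W" "Inr v1 \<in> W"
    using interior_face_weights[OF conn \<open>\<Sigma> \<subseteq> G\<close> face W] .
  define p where "p = (\<Sum>a\<in>\<Sigma>. w a *\<^sub>R rpt a)"
  define d where "d = push_out W e1 v1"
  have pos: "positive_combination \<Sigma> p" unfolding positive_combination_def p_def using w by blast
  obtain r where r: "0 < r"
    "\<And>q. dist p q < r \<Longrightarrow> signed_indicator UNIV \<bullet> q = 0 \<Longrightarrow>
       signed_indicator (range Inl) \<bullet> q = 1 \<Longrightarrow> q \<in> root_polytope G"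
    "\<And>\<Gamma> q. \<Gamma> \<in> \<T> \<Longrightarrow> q \<in> simplex_of \<Gamma> \<Longrightarrow> dist p q < r \<Longrightarrow> p \<in> simplex_of \<Gamma>"
    using near_rel_interior_point[OF conn tri p[folded p_def]] by blast
  have "\<And>a. a \<in> \<Sigma> \<Longrightarrow> 0 < w a" using w(1) by simp
  then obtain t where t: "0 < t" "norm (t *\<^sub>R d) < r"
    "\<And>a. a \<in> \<Sigma> \<Longrightarrow> t * (\<Sum>u\<in>UNIV. \<bar>d $ u\<bar>) < w a"
    using exists_small_step[OF r(1) finite, of \<Sigma> w d "\<Sum>u\<in>UNIV. \<bar>d $ u\<bar>"] by blast
  define q where "q = p + t *\<^sub>R d"
  have "dist p q < r" using t(2) by (simp add: q_def dist_norm)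
  have hyper: "signed_indicator UNIV \<bullet> q = 0" "signed_indicator (range Inl) \<bullet> q = 1"
    using w(2) by (simp_all add: q_def d_def p_def inner_add_right inner_signed_indicator_sum_rpt
        inner_signed_indicator_UNIV_push_out inner_signed_indicator_Inl_push_out)
  have "perturbed_point G \<Sigma> \<T> W q"
  proof
    show "q \<in> root_polytope G" using r(2) \<open>dist p q < r\<close> hyper by blast
  next
    fix \<Gamma> assume "\<Gamma> \<in> \<T>" "q \<in> simplex_of \<Gamma>"
    then have "p \<in> simplex_of \<Gamma>" using r(3) \<open>dist p q < r\<close> by blast
    then show "\<Sigma> \<subseteq> \<Gamma>"
      by (rule subset_if_positive_combination[OF tri \<Gamma>0(1) \<open>\<Gamma> \<in> \<T>\<close> \<Gamma>0(2) pos])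
  next
    fix \<Gamma> e v assume "cycle_free \<Gamma>" "\<Sigma> \<subseteq> \<Gamma>"
    note coords = tree_coordinates_perturbation[OF this W anchor t(1) t(3)[unfolded d_def]]
    show "(e, v) \<in> \<Sigma> \<Longrightarrow> 0 < signed_indicator (side \<Gamma> e v) \<bullet> q"
      using coords(1) unfolding q_def p_def d_def .
    show "(e, v) \<in> \<Gamma> - \<Sigma> \<Longrightarrow>
        (0 < signed_indicator (side \<Gamma> e v) \<bullet> q \<longleftrightarrow> W \<inter> side \<Gamma> e v = {}) \<and>
        signed_indicator (side \<Gamma> e v) \<bullet> q \<noteq> 0"
      using coords(2) unfolding q_def p_def d_def .
  qed (fact tri W hyper)+
  then show thesis by (rule that)
qed

context perturbed_point
begin

lemma cycle_free_bconnected: "\<Gamma> \<in> \<T> \<Longrightarrow> cycle_free \<Gamma> \<and> bconnected \<Gamma>"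
  using triangulation by (auto simp: triangulation_def spanning_tree_def)

lemma violet_faces_iff_coordinate_pos:
  assumes "\<Gamma> \<in> \<T>" "\<Sigma> \<subseteq> \<Gamma>" "(e, v) \<in> \<Gamma> - \<Sigma>"
  shows "violet_faces \<Gamma> W e v \<longleftrightarrow> 0 < signed_indicator (side \<Gamma> e v) \<bullet> q"
proof -
  have \<Gamma>: "cycle_free \<Gamma>" "bconnected \<Gamma>" using cycle_free_bconnected[OF assms(1)] by simp_all
  have "\<Sigma> \<subseteq> \<Gamma> - {(e, v)}" using assms(2,3) by blast
  then have "violet_faces \<Gamma> W e v \<longleftrightarrow> W \<inter> side \<Gamma> e v = {}"
    using violet_faces_iff_side[OF \<Gamma>, of e v \<Sigma> W] component assms(3) by simp
  also have "\<dots> \<longleftrightarrow> 0 < signed_indicator (side \<Gamma> e v) \<bullet> q"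
    using coordinate_sign[OF \<Gamma>(1) assms(2,3)] by simp
  finally show ?thesis .
qed

lemma exists_good_tree:
  obtains \<Gamma> where "\<Gamma> \<in> \<T>" "\<Sigma> \<subseteq> \<Gamma>" "\<forall>e v. (e, v) \<in> \<Gamma> - \<Sigma> \<longrightarrow> violet_faces \<Gamma> W e v"
proof -
  obtain \<Gamma> where \<Gamma>: "\<Gamma> \<in> \<T>" "q \<in> simplex_of \<Gamma>"
    using in_root_polytope triangulation unfolding triangulation_def by blast
  then have "\<Sigma> \<subseteq> \<Gamma>" by (rule carrier_contains)
  have "violet_faces \<Gamma> W e v" if "(e, v) \<in> \<Gamma> - \<Sigma>" for e v
  proof -
    have "cycle_free \<Gamma>" using cycle_free_bconnected[OF \<Gamma>(1)] by simp
    then have "0 \<le> signed_indicator (side \<Gamma> e v) \<bullet> q" "signed_indicator (side \<Gamma> e v) \<bullet> q \<noteq> 0"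
      using tree_coordinate_nonneg[of \<Gamma> e v q] coordinate_sign[of \<Gamma> e v] \<Gamma>(2) \<open>\<Sigma> \<subseteq> \<Gamma>\<close> that
      by simp_all
    then show ?thesis using violet_faces_iff_coordinate_pos[OF \<Gamma>(1) \<open>\<Sigma> \<subseteq> \<Gamma>\<close> that] by simp
  qed
  then show thesis by (intro that[OF \<Gamma>(1) \<open>\<Sigma> \<subseteq> \<Gamma>\<close>] allI impI)
qed

lemma positive_combination_if_good:
  assumes "\<Gamma> \<in> \<T>" "\<Sigma> \<subseteq> \<Gamma>" "\<forall>e v. (e, v) \<in> \<Gamma> - \<Sigma> \<longrightarrow> violet_faces \<Gamma> W e v"
  shows "positive_combination \<Gamma> q"
proof (rule positive_combination_if_tree_coordinates_pos[OF _ _ hyperplane_UNIV hyperplane_Inl])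
  show "cycle_free \<Gamma>" "bconnected \<Gamma>" using cycle_free_bconnected[OF assms(1)] by simp_all
  fix e v assume "(e, v) \<in> \<Gamma>"
  then show "0 < signed_indicator (side \<Gamma> e v) \<bullet> q"
    using coordinate_pos[OF \<open>cycle_free \<Gamma>\<close> assms(2)] violet_faces_iff_coordinate_pos[OF assms(1,2)] assms(3)
    by (cases "(e, v) \<in> \<Sigma>") simp_all
qed

lemma good_tree_unique:
  assumes "\<Gamma> \<in> \<T>" "\<Sigma> \<subseteq> \<Gamma>" "\<forall>e v. (e, v) \<in> \<Gamma> - \<Sigma> \<longrightarrow> violet_faces \<Gamma> W e v"
    and "\<Gamma>' \<in> \<T>" "\<Sigma> \<subseteq> \<Gamma>'" "\<forall>e v. (e, v) \<in> \<Gamma>' - \<Sigma> \<longrightarrow> violet_faces \<Gamma>' W e v"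
  shows "\<Gamma>' = \<Gamma>"
proof -
  have q: "positive_combination \<Gamma> q" "positive_combination \<Gamma>' q"
    using positive_combination_if_good[OF assms(1-3)] positive_combination_if_good[OF assms(4-6)] .
  show ?thesis
  proof (rule subset_antisym)
    show "\<Gamma>' \<subseteq> \<Gamma>"
      using subset_if_positive_combination[OF triangulation assms(4,1) order_refl q(2)
          positive_combination_in_simplex_of[OF q(1)]] .
    show "\<Gamma> \<subseteq> \<Gamma>'"
      using subset_if_positive_combination[OF triangulation assms(1,4) order_refl q(1)
          positive_combination_in_simplex_of[OF q(2)]] .
  qed
qed

end

theorem lemma4p1:
  fixes G \<Sigma> :: "('e::finite \<times> 'v::finite) set"
    and \<T> :: "('e \<times> 'v) set set"
    and W :: "('e + 'v) set"
  assumes "bconnected G"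
    and "triangulation G \<T>"
    and "\<Sigma> \<subseteq> G" and "cycle_free \<Sigma>"
    and "interior_face G \<T> (simplex_of \<Sigma>)"
    and "W \<in> components \<Sigma>"
  shows "\<exists>!\<Gamma>. \<Gamma> \<in> \<T> \<and> \<Sigma> \<subseteq> \<Gamma> \<and>
           (\<forall>e v. (e, v) \<in> \<Gamma> - \<Sigma> \<longrightarrow> violet_faces \<Gamma> W e v)"
proof -
  obtain q where "perturbed_point G \<Sigma> \<T> W q"
    using exists_perturbed_point[OF assms(1,2,3,5,6)] .
  then interpret perturbed_point G \<Sigma> \<T> W q .
  obtain \<Gamma> where \<Gamma>: "\<Gamma> \<in> \<T>" "\<Sigma> \<subseteq> \<Gamma>" "\<forall>e v. (e, v) \<in> \<Gamma> - \<Sigma> \<longrightarrow> violet_faces \<Gamma> W e v"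
    by (rule exists_good_tree)
  show ?thesis
  proof (rule ex1I[of _ \<Gamma>])
    fix \<Gamma>' assume "\<Gamma>' \<in> \<T> \<and> \<Sigma> \<subseteq> \<Gamma>' \<and> (\<forall>e v. (e, v) \<in> \<Gamma>' - \<Sigma> \<longrightarrow> violet_faces \<Gamma>' W e v)"
    then show "\<Gamma>' = \<Gamma>" by (elim conjE) (rule good_tree_unique[OF \<Gamma>])
  qed (use \<Gamma> in simp)
qed

end
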